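(* Let $d\in\mathbb{N}$, let $\rho$ be a norm on $\mathbb{R}^d$, and let $f:(0,\infty)\to[0,1]$ be a function with $f(R)\to 0$ as $R\to\infty$. Then there exist a Lebesgue measurable set $A\subseteq\mathbb{R}^d$ and a sequence of positive real numbers $(R_n)_{n\in\mathbb{N}}$ with $R_n\to\infty$ such that: (i) $\rho(x-y)\neq R_n$ for all $x,y\in A$ and all $n\in\mathbb{N}$; (ii) $\mu\big(A\cap B^{\rho}_{R_n}\big)\geq f(R_n)\,\mu\big(B^{\rho}_{R_n}\big)$ for all $n\in\mathbb{N}$.
   Context: A norm on $\mathbb{R}^d$ is a function $\rho:\mathbb{R}^d\to[0,\infty)$ with $\rho(x)>0$ for $x\neq 0$, $\rho(\lambda x)=|\lambda|\rho(x)$ for all $\lambda\in\mathbb{R}$, $x\in\mathbb{R}^d$, and $\rho(x+y)\le\rho(x)+\rho(y)$. For $R>0$, $B^{\rho}_R=\{x\in\mathbb{R}^d:\rho(x)<R\}$. $\mu$ denotes Lebesgue measure on $\mathbb{R}^d$. (In particular, taking $\rho$ to be the Euclidean norm gives a set $A$ avoiding the Euclidean distances $R_n$ with $\mu(A\cap B_{R_n})\ge f(R_n)\mu(B_{R_n})$.) *)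

theory Defs
  imports "HOL-Analysis.Analysis"
begin

definition is_norm :: "('a::euclidean_space \<Rightarrow> real) \<Rightarrow> bool" where
  "is_norm \<rho> \<longleftrightarrow>
     (\<forall>x. 0 \<le> \<rho> x) \<and>
     (\<forall>x. x \<noteq> 0 \<longrightarrow> \<rho> x > 0) \<and>
     (\<forall>(c::real) x. \<rho> (c *\<^sub>R x) = \<bar>c\<bar> * \<rho> x) \<and>
     (\<forall>x y. \<rho> (x + y) \<le> \<rho> x + \<rho> y)"

definition rho_ball :: "('a \<Rightarrow> real) \<Rightarrow> real \<Rightarrow> 'a set" where
  "rho_ball \<rho> R = {x. \<rho> x < R}"

end

theory Submission
  imports Defs
begin

text \<open>
  Since all norms on a finite-dimensional space are equivalent, there is \<open>c > 0\<close> with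
  \<open>c \<parallel>x\<parallel> \<le> \<rho> x\<close>, while \<open>\<rho> x \<le> a max\<^sub>b \<bar>x\<^sub>b\<bar>\<close> for \<open>a = \<Sum>\<^sub>b \<rho> b\<close>; fix an integer
  \<open>p \<ge> 1 + a / c\<close>. For block lengths \<open>\<sigma>\<^sub>n = p\<^sup>n k\<^sub>0 \<cdots> k\<^sub>n\<close> let \<open>A\<close> consist of the points
  whose coordinates \<open>t \<ge> 0\<close> satisfy \<open>\<lfloor>t\<rfloor> mod p\<sigma>\<^sub>n < \<sigma>\<^sub>n\<close> for all \<open>n\<close>. Two points of \<open>A\<close>
  whose coordinates lie in the same blocks of period \<open>p\<sigma>\<^sub>n\<close> are at \<open>\<rho>\<close>-distance \<open>< a\<sigma>\<^sub>n\<close>;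
  otherwise some coordinates differ by more than \<open>(p - 1)\<sigma>\<^sub>n\<close>, so the \<open>\<rho>\<close>-distance exceeds
  \<open>c(p - 1)\<sigma>\<^sub>n \<ge> a\<sigma>\<^sub>n\<close>. Hence \<open>A\<close> avoids every distance \<open>R\<^sub>n = a\<sigma>\<^sub>n\<close>. Inside the ball of
  radius \<open>R\<^sub>N\<close>, \<open>A\<close> contains \<open>(k\<^sub>0 \<cdots> k\<^sub>N)\<^sup>d\<close> unit cubes, a proportion at least
  \<open>(c / 2ap\<^sup>N)\<^sup>d\<close> of the ball that does not depend on the \<open>k\<^sub>n\<close>; choosing each \<open>k\<^sub>N\<close> large
  makes \<open>f(R\<^sub>N)\<close> smaller than this proportion.
\<close>

lemma is_norm_zero: "is_norm \<rho> \<Longrightarrow> \<rho> 0 = 0"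
  unfolding is_norm_def by (metis abs_zero mult_zero_left scaleR_zero_left)

lemma is_norm_minus: "is_norm \<rho> \<Longrightarrow> \<rho> (- x) = \<rho> x"
  unfolding is_norm_def by (metis abs_minus_cancel abs_one mult_1 scaleR_minus1_left)

lemma is_norm_Basis_pos: "is_norm \<rho> \<Longrightarrow> b \<in> Basis \<Longrightarrow> 0 < \<rho> b"
  unfolding is_norm_def using nonzero_Basis by blast

lemma is_norm_sum_Basis_pos:
  fixes \<rho> :: "'a::euclidean_space \<Rightarrow> real"
  assumes "is_norm \<rho>"
  shows "0 < (\<Sum>b\<in>Basis. \<rho> b)"
  using assms by (intro sum_pos) (auto simp: is_norm_Basis_pos)

lemma is_norm_sum_le:
  assumes "is_norm \<rho>" "finite I"
  shows "\<rho> (\<Sum>i\<in>I. v i) \<le> (\<Sum>i\<in>I. \<rho> (v i))"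
  using assms(2)
proof induction
  case empty
  then show ?case using is_norm_zero[OF assms(1)] by simp
next
  case (insert i I)
  have "\<rho> (v i + (\<Sum>i\<in>I. v i)) \<le> \<rho> (v i) + \<rho> (\<Sum>i\<in>I. v i)"
    using assms(1) unfolding is_norm_def by blast
  with insert show ?case by simp
qed

lemma is_norm_le_sum_Basis:
  assumes "is_norm \<rho>"
  shows "\<rho> x \<le> (\<Sum>b\<in>Basis. \<bar>x \<bullet> b\<bar> * \<rho> b)"
proof -
  have "\<rho> x = \<rho> (\<Sum>b\<in>Basis. (x \<bullet> b) *\<^sub>R b)" by (simp add: euclidean_representation)
  also have "\<dots> \<le> (\<Sum>b\<in>Basis. \<rho> ((x \<bullet> b) *\<^sub>R b))" by (rule is_norm_sum_le[OF assms]) simp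
  also have "\<dots> = (\<Sum>b\<in>Basis. \<bar>x \<bullet> b\<bar> * \<rho> b)" using assms unfolding is_norm_def by simp
  finally show ?thesis .
qed

lemma is_norm_le_norm:
  assumes "is_norm \<rho>"
  shows "\<rho> x \<le> (\<Sum>b\<in>Basis. \<rho> b) * norm x"
proof -
  have "\<rho> x \<le> (\<Sum>b\<in>Basis. \<bar>x \<bullet> b\<bar> * \<rho> b)" by (rule is_norm_le_sum_Basis[OF assms])
  also have "\<dots> \<le> (\<Sum>b\<in>Basis. norm x * \<rho> b)"
    using Basis_le_norm is_norm_Basis_pos[OF assms]
    by (intro sum_mono mult_right_mono) (auto simp: less_imp_le)
  finally show ?thesis by (simp add: sum_distrib_left mult.commute)
qed

lemma is_norm_less_of_coordinates_less:
  assumes "is_norm \<rho>" and "\<And>b. b \<in> Basis \<Longrightarrow> \<bar>x \<bullet> b\<bar> < r"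
  shows "\<rho> x < (\<Sum>b\<in>Basis. \<rho> b) * r"
proof -
  have "\<rho> x \<le> (\<Sum>b\<in>Basis. \<bar>x \<bullet> b\<bar> * \<rho> b)" by (rule is_norm_le_sum_Basis[OF assms(1)])
  also have "\<dots> < (\<Sum>b\<in>Basis. r * \<rho> b)"
    using assms is_norm_Basis_pos[OF assms(1)] by (intro sum_strict_mono) auto
  finally show ?thesis by (simp add: sum_distrib_left mult.commute)
qed

lemma is_norm_continuous_on:
  assumes "is_norm \<rho>"
  shows "continuous_on S \<rho>"
proof (rule lipschitz_on_continuous_on)
  show "(\<Sum>b\<in>Basis. \<rho> b)-lipschitz_on S \<rho>"
  proof (rule lipschitz_onI)
    fix x y
    have "\<rho> x \<le> \<rho> y + \<rho> (x - y)" "\<rho> y \<le> \<rho> x + \<rho> (y - x)"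
      using assms unfolding is_norm_def by (metis add.commute diff_add_cancel)+
    moreover have "\<rho> (y - x) = \<rho> (x - y)" using is_norm_minus[OF assms, of "x - y"] by simp
    moreover have "\<rho> (x - y) \<le> (\<Sum>b\<in>Basis. \<rho> b) * dist x y"
      using is_norm_le_norm[OF assms] by (simp add: dist_norm)
    ultimately show "dist (\<rho> x) (\<rho> y) \<le> (\<Sum>b\<in>Basis. \<rho> b) * dist x y"
      unfolding dist_real_def by linarith
  qed (use is_norm_sum_Basis_pos[OF assms] in simp)
qed

text \<open>The minimum of \<open>\<rho>\<close> on the compact unit sphere is the constant.\<close>

lemma is_norm_ge_norm:
  fixes \<rho> :: "'a::euclidean_space \<Rightarrow> real"
  assumes "is_norm \<rho>"
  obtains c where "0 < c" "\<And>x. c * norm x \<le> \<rho> x"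
proof -
  have "sphere (0::'a) 1 \<noteq> {}"
    using SOME_Basis norm_Basis by (metis mem_sphere_0 empty_iff)
  then obtain x0 where x0: "x0 \<in> sphere (0::'a) 1" "\<And>y. y \<in> sphere 0 1 \<Longrightarrow> \<rho> x0 \<le> \<rho> y"
    using continuous_attains_inf[OF compact_sphere _ is_norm_continuous_on[OF assms]] by blast
  have "\<rho> x0 * norm x \<le> \<rho> x" for x
  proof (cases "x = 0")
    case True
    then show ?thesis using is_norm_zero[OF assms] by simp
  next
    case False
    have "\<rho> x0 \<le> \<rho> ((1 / norm x) *\<^sub>R x)" using x0(2) False by simp
    also have "\<dots> = \<rho> x / norm x" using assms unfolding is_norm_def by simp
    finally show ?thesis using False by (simp add: field_simps)
  qed
  moreover have "0 < \<rho> x0" using x0(1) assms unfolding is_norm_def by (metis norm_zero zero_neq_one mem_sphere_0)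
  ultimately show thesis using that by blast
qed

lemma sets_lebesgue_rho_ball:
  assumes "is_norm \<rho>"
  shows "rho_ball \<rho> R \<in> sets lebesgue"
proof -
  have "open (rho_ball \<rho> R)"
    unfolding rho_ball_def by (rule open_Collect_less[OF is_norm_continuous_on[OF assms] continuous_on_const])
  then show ?thesis by (simp add: borel_open)
qed

lemma emeasure_lborel_coordinatewise:
  assumes [measurable]: "U \<in> sets borel"
  shows "emeasure lborel {x::'a::euclidean_space. \<forall>b\<in>Basis. x \<bullet> b \<in> U}
           = emeasure lborel U ^ DIM('a)"
proof -
  have "{x::'a. \<forall>b\<in>Basis. x \<bullet> b \<in> U} \<in> sets borel" by measurable
  then have "emeasure lborel {x::'a. \<forall>b\<in>Basis. x \<bullet> b \<in> U}
      = (\<integral>\<^sup>+x. indicator {x::'a. \<forall>b\<in>Basis. x \<bullet> b \<in> U} x \<partial>lborel)"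
    by simp
  also have "\<dots> = (\<integral>\<^sup>+x. (\<Prod>b\<in>Basis. indicator U ((x::'a) \<bullet> b)) \<partial>lborel)"
    by (intro nn_integral_cong) (auto simp: indicator_def)
  also have "\<dots> = (\<Prod>b\<in>(Basis::'a set). emeasure lborel U)"
    by (subst nn_integral_lborel_prod) auto
  finally show ?thesis by simp
qed

lemma emeasure_rho_ball_le:
  fixes \<rho> :: "'a::euclidean_space \<Rightarrow> real"
  assumes \<rho>: "is_norm \<rho>" and c: "0 < c" "\<And>x. c * norm x \<le> \<rho> x" and "0 \<le> R"
  shows "emeasure lebesgue (rho_ball \<rho> R) \<le> ennreal ((2 * R / c) ^ DIM('a))"
proof -
  define Q where "Q = {x::'a. \<forall>b\<in>Basis. x \<bullet> b \<in> {- (R / c) .. R / c}}"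
  have "rho_ball \<rho> R \<subseteq> Q"
  proof
    fix x assume "x \<in> rho_ball \<rho> R"
    then have "c * norm x \<le> R" using c(2)[of x] unfolding rho_ball_def by simp
    then have "norm x \<le> R / c" using c(1) by (simp add: field_simps)
    then show "x \<in> Q" unfolding Q_def using Basis_le_norm[of _ x] by (force simp: abs_le_iff)
  qed
  moreover have Q: "Q \<in> sets borel" unfolding Q_def by measurable
  ultimately have "emeasure lebesgue (rho_ball \<rho> R) \<le> emeasure lebesgue Q"
    by (intro emeasure_mono) simp_all
  also have "\<dots> = emeasure lborel Q" using Q by simp
  also have "\<dots> = ennreal ((2 * R / c) ^ DIM('a))"
  proof -
    have "- (R / c) \<le> R / c" using \<open>0 \<le> R\<close> c(1) by simp
    then have "emeasure lborel {- (R / c) .. R / c} = ennreal (2 * R / c)" by simp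
    moreover have "0 \<le> 2 * R / c" using \<open>0 \<le> R\<close> c(1) by simp
    moreover have "emeasure lborel Q = emeasure lborel {- (R / c) .. R / c} ^ DIM('a)"
      unfolding Q_def by (rule emeasure_lborel_coordinatewise) simp
    ultimately show ?thesis by (simp add: ennreal_power)
  qed
  finally show ?thesis .
qed

lemma emeasure_lborel_nat_floor_in:
  assumes "finite J"
  shows "emeasure lborel {t::real. 0 \<le> t \<and> nat \<lfloor>t\<rfloor> \<in> J} = card J"
proof -
  have eq: "{t::real. 0 \<le> t \<and> nat \<lfloor>t\<rfloor> \<in> J} = (\<Union>j\<in>J. {real j..<real j + 1})"
  proof (intro set_eqI iffI)
    fix t :: real assume t: "t \<in> {t. 0 \<le> t \<and> nat \<lfloor>t\<rfloor> \<in> J}"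
    then have "real (nat \<lfloor>t\<rfloor>) = of_int \<lfloor>t\<rfloor>" by simp
    then have "real (nat \<lfloor>t\<rfloor>) \<le> t" "t < real (nat \<lfloor>t\<rfloor>) + 1" by linarith+
    then show "t \<in> (\<Union>j\<in>J. {real j..<real j + 1})" using t by auto
  next
    fix t :: real assume "t \<in> (\<Union>j\<in>J. {real j..<real j + 1})"
    then obtain j where "j \<in> J" "real j \<le> t" "t < real j + 1" by auto
    then show "t \<in> {t. 0 \<le> t \<and> nat \<lfloor>t\<rfloor> \<in> J}"
      by (metis (mono_tags) floor_eq2 mem_Collect_eq nat_int of_int_of_nat_eq of_nat_0_le_iff order_trans)
  qed
  have "disjoint_family_on (\<lambda>j. {real j..<real j + 1}) J"
    by (auto simp: disjoint_family_on_def)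
  then have "emeasure lborel (\<Union>j\<in>J. {real j..<real j + 1}) = (\<Sum>j\<in>J. emeasure lborel {real j..<real j + 1})"
    by (intro sum_emeasure[symmetric] assms) auto
  then show ?thesis using eq by simp
qed

definition block_length :: "nat \<Rightarrow> (nat \<Rightarrow> nat) \<Rightarrow> nat \<Rightarrow> nat" where
  "block_length p k n = p ^ n * (\<Prod>i\<le>n. k i)"

lemma block_length_0: "block_length p k 0 = k 0"
  by (simp add: block_length_def)

lemma block_length_Suc: "block_length p k (Suc n) = k (Suc n) * (p * block_length p k n)"
  by (simp add: block_length_def prod.atMost_Suc algebra_simps)

lemma block_length_pos: "0 < p \<Longrightarrow> (\<And>i. 0 < k i) \<Longrightarrow> 0 < block_length p k n"
  by (simp add: block_length_def prod_pos)

lemma block_length_dvd: "m \<le> n \<Longrightarrow> block_length p k m dvd block_length p k n"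
  unfolding block_length_def by (intro mult_dvd_mono le_imp_power_dvd prod_dvd_prod_subset) auto

lemma block_length_mono:
  "0 < p \<Longrightarrow> (\<And>i. 0 < k i) \<Longrightarrow> m \<le> n \<Longrightarrow> block_length p k m \<le> block_length p k n"
  by (rule dvd_imp_le[OF block_length_dvd block_length_pos])

lemma le_block_length: "0 < p \<Longrightarrow> (\<And>i. 0 < k i) \<Longrightarrow> k n \<le> block_length p k n"
  by (intro dvd_imp_le block_length_pos) (auto simp: block_length_def intro: dvd_mult)

lemma card_mod_periodic:
  "card {j. j < q * t \<and> Q (j mod t)} = q * card {i. i < t \<and> Q i}"
proof (induction q)
  case 0
  then show ?case by simp
next
  case (Suc q)
  have eq: "{j. j < Suc q * t \<and> Q (j mod t)}
      = {j. j < q * t \<and> Q (j mod t)} \<union> (\<lambda>i. q * t + i) ` {i. i < t \<and> Q i}"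
  proof (intro set_eqI iffI)
    fix j assume j: "j \<in> {j. j < Suc q * t \<and> Q (j mod t)}"
    show "j \<in> {j. j < q * t \<and> Q (j mod t)} \<union> (\<lambda>i. q * t + i) ` {i. i < t \<and> Q i}"
    proof (cases "j < q * t")
      case False
      define i where "i = j - q * t"
      have "j = q * t + i" "i < t" using False j unfolding i_def by auto
      moreover from this have "j mod t = i" by simp
      ultimately show ?thesis using j by auto
    qed (use j in auto)
  qed auto
  have "card ({j. j < q * t \<and> Q (j mod t)} \<union> (\<lambda>i. q * t + i) ` {i. i < t \<and> Q i})
      = card {j. j < q * t \<and> Q (j mod t)} + card ((\<lambda>i. q * t + i) ` {i. i < t \<and> Q i})"
    by (rule card_Un_disjoint) auto
  also have "card ((\<lambda>i. q * t + i) ` {i. i < t \<and> Q i}) = card {i. i < t \<and> Q i}"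
    by (rule card_image) (simp add: inj_on_def)
  finally show ?case using eq Suc by simp
qed

definition block_residues :: "nat \<Rightarrow> (nat \<Rightarrow> nat) \<Rightarrow> nat \<Rightarrow> nat set" where
  "block_residues p k N =
     {j. j < block_length p k N \<and> (\<forall>m<N. j mod (p * block_length p k m) < block_length p k m)}"

lemma card_block_residues:
  assumes "0 < p"
  shows "card (block_residues p k N) = (\<Prod>i\<le>N. k i)"
  unfolding block_residues_def
proof (induction N)
  case 0
  then show ?case by (simp add: block_length_0)
next
  case (Suc N)
  let ?\<sigma> = "block_length p k"
  define Q where "Q i = (\<forall>m\<le>N. i mod (p * ?\<sigma> m) < ?\<sigma> m)" for i
  have "j mod (p * ?\<sigma> N) mod (p * ?\<sigma> m) = j mod (p * ?\<sigma> m)" if "m \<le> N" for j m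
    using mod_mod_cancel[OF mult_dvd_mono[OF dvd_refl block_length_dvd[OF that]]] .
  then have "(\<forall>m<Suc N. j mod (p * ?\<sigma> m) < ?\<sigma> m) \<longleftrightarrow> Q (j mod (p * ?\<sigma> N))" for j
    unfolding Q_def less_Suc_eq_le by simp
  then have eq1: "{j. j < ?\<sigma> (Suc N) \<and> (\<forall>m<Suc N. j mod (p * ?\<sigma> m) < ?\<sigma> m)}
      = {j. j < k (Suc N) * (p * ?\<sigma> N) \<and> Q (j mod (p * ?\<sigma> N))}"
    by (simp only: block_length_Suc)
  have eq2: "{i. i < p * ?\<sigma> N \<and> Q i} = {j. j < ?\<sigma> N \<and> (\<forall>m<N. j mod (p * ?\<sigma> m) < ?\<sigma> m)}"
  proof (intro set_eqI iffI)
    fix i assume i: "i \<in> {i. i < p * ?\<sigma> N \<and> Q i}"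
    then have "i mod (p * ?\<sigma> N) < ?\<sigma> N" unfolding Q_def by blast
    with i show "i \<in> {j. j < ?\<sigma> N \<and> (\<forall>m<N. j mod (p * ?\<sigma> m) < ?\<sigma> m)}"
      unfolding Q_def by auto
  next
    fix i assume i: "i \<in> {j. j < ?\<sigma> N \<and> (\<forall>m<N. j mod (p * ?\<sigma> m) < ?\<sigma> m)}"
    have "?\<sigma> N \<le> p * ?\<sigma> N" using assms by simp
    moreover have "i < ?\<sigma> N" using i by simp
    ultimately have "i < p * ?\<sigma> N" by linarith
    moreover have "Q i"
      unfolding Q_def
    proof (intro allI impI)
      fix m assume "m \<le> N"
      then show "i mod (p * ?\<sigma> m) < ?\<sigma> m"
        by (cases "m = N") (use i \<open>i < p * ?\<sigma> N\<close> in auto)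
    qed
    ultimately show "i \<in> {i. i < p * ?\<sigma> N \<and> Q i}" by simp
  qed
  have "card {j. j < ?\<sigma> (Suc N) \<and> (\<forall>m<Suc N. j mod (p * ?\<sigma> m) < ?\<sigma> m)}
      = k (Suc N) * card {j. j < ?\<sigma> N \<and> (\<forall>m<N. j mod (p * ?\<sigma> m) < ?\<sigma> m)}"
    by (simp only: eq1 card_mod_periodic eq2)
  then show ?case using Suc.IH by (simp add: prod.atMost_Suc)
qed

definition gap_set :: "nat \<Rightarrow> (nat \<Rightarrow> nat) \<Rightarrow> real set" where
  "gap_set p \<sigma> = {t. 0 \<le> t \<and> (\<forall>n. nat \<lfloor>t\<rfloor> mod (p * \<sigma> n) < \<sigma> n)}"

definition gap_grid :: "nat \<Rightarrow> (nat \<Rightarrow> nat) \<Rightarrow> 'a::euclidean_space set" where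
  "gap_grid p \<sigma> = {x. \<forall>b\<in>Basis. x \<bullet> b \<in> gap_set p \<sigma>}"

lemma gap_grid_sets_lebesgue: "gap_grid p \<sigma> \<in> sets (lebesgue :: 'a::euclidean_space measure)"
proof -
  have "(gap_grid p \<sigma> :: 'a set) \<in> sets borel" unfolding gap_grid_def gap_set_def by measurable
  then show ?thesis by simp
qed

lemma mem_gap_set_of_block_residues:
  assumes "0 < p" "\<And>i. 0 < k i" and "0 \<le> t" "nat \<lfloor>t\<rfloor> \<in> block_residues p k N"
  shows "t \<in> gap_set p (block_length p k)"
proof -
  have "nat \<lfloor>t\<rfloor> mod (p * block_length p k m) < block_length p k m" for m
  proof (cases "m < N")
    case True
    then show ?thesis using assms(4) unfolding block_residues_def by simp
  next
    case False
    then have "block_length p k N \<le> block_length p k m" using assms(1,2) by (intro block_length_mono) auto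
    moreover have "nat \<lfloor>t\<rfloor> < block_length p k N" using assms(4) unfolding block_residues_def by simp
    moreover have "block_length p k m \<le> p * block_length p k m" using assms(1) by simp
    ultimately show ?thesis by (metis mod_less order_less_le_trans)
  qed
  then show ?thesis using assms(3) unfolding gap_set_def by simp
qed

lemma nat_floor_block_bounds:
  fixes t :: real
  assumes "0 \<le> t" "nat \<lfloor>t\<rfloor> mod \<tau> < \<sigma>"
  shows "real (nat \<lfloor>t\<rfloor> div \<tau> * \<tau>) \<le> t \<and> t < real (nat \<lfloor>t\<rfloor> div \<tau> * \<tau>) + \<sigma>"
proof -
  have "real (nat \<lfloor>t\<rfloor>) = real (nat \<lfloor>t\<rfloor> div \<tau> * \<tau>) + real (nat \<lfloor>t\<rfloor> mod \<tau>)"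
    by (metis div_mult_mod_eq of_nat_add)
  moreover have "real (nat \<lfloor>t\<rfloor>) = of_int \<lfloor>t\<rfloor>" using assms(1) by simp
  moreover have "real (nat \<lfloor>t\<rfloor> mod \<tau>) + 1 \<le> \<sigma>" using assms(2) by linarith
  ultimately show ?thesis by linarith
qed

lemma gap_grid_diff_ne:
  fixes \<rho> :: "'a::euclidean_space \<Rightarrow> real"
  assumes \<rho>: "is_norm \<rho>" and c: "0 < c" "\<And>x. c * norm x \<le> \<rho> x"
    and p: "(\<Sum>b\<in>Basis. \<rho> b) \<le> c * (real p - 1)"
    and x: "x \<in> gap_grid p \<sigma>" and y: "y \<in> gap_grid p \<sigma>"
  shows "\<rho> (x - y) \<noteq> (\<Sum>b\<in>Basis. \<rho> b) * \<sigma> n"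
proof -
  define \<tau> where "\<tau> = p * \<sigma> n"
  define q where "q t = nat \<lfloor>t\<rfloor> div \<tau>" for t :: real
  have bounds: "real (q (z \<bullet> b) * \<tau>) \<le> z \<bullet> b \<and> z \<bullet> b < real (q (z \<bullet> b) * \<tau>) + \<sigma> n"
    if "z \<in> gap_grid p \<sigma>" "b \<in> Basis" for z b :: 'a
    using that nat_floor_block_bounds[of "z \<bullet> b" \<tau> "\<sigma> n"]
    unfolding gap_grid_def gap_set_def q_def \<tau>_def by auto
  show ?thesis
  proof (cases "\<forall>b\<in>Basis. q (x \<bullet> b) = q (y \<bullet> b)")
    case True
    have "\<bar>(x - y) \<bullet> b\<bar> < \<sigma> n" if "b \<in> Basis" for b
    proof -
      have "q (x \<bullet> b) = q (y \<bullet> b)" using True that by blast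
      with bounds[OF x that] bounds[OF y that] show ?thesis
        by (auto simp: inner_diff_left abs_diff_less_iff)
    qed
    then have "\<rho> (x - y) < (\<Sum>b\<in>Basis. \<rho> b) * \<sigma> n"
      by (rule is_norm_less_of_coordinates_less[OF \<rho>])
    then show ?thesis by simp
  next
    case False
    then obtain b where b: "b \<in> Basis" "q (x \<bullet> b) \<noteq> q (y \<bullet> b)" by blast
    then have "q (x \<bullet> b) * \<tau> + \<tau> \<le> q (y \<bullet> b) * \<tau> \<or> q (y \<bullet> b) * \<tau> + \<tau> \<le> q (x \<bullet> b) * \<tau>"
      by (metis linorder_neqE_nat Suc_leI mult_le_mono1 mult_Suc add.commute)
    then have "real (q (x \<bullet> b) * \<tau>) + \<tau> \<le> real (q (y \<bullet> b) * \<tau>)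
             \<or> real (q (y \<bullet> b) * \<tau>) + \<tau> \<le> real (q (x \<bullet> b) * \<tau>)"
      by (metis of_nat_add of_nat_le_iff)
    then have far: "real \<tau> - \<sigma> n < \<bar>(x - y) \<bullet> b\<bar>"
      using bounds[OF x b(1)] bounds[OF y b(1)] by (auto simp: inner_diff_left)
    have "(\<Sum>b\<in>Basis. \<rho> b) * \<sigma> n \<le> c * (real p - 1) * \<sigma> n"
      using p by (simp add: mult_right_mono)
    also have "\<dots> = c * (real \<tau> - \<sigma> n)" by (simp add: \<tau>_def algebra_simps)
    also have "\<dots> < c * \<bar>(x - y) \<bullet> b\<bar>" using far c(1) by simp
    also have "\<dots> \<le> c * norm (x - y)" using Basis_le_norm[OF b(1)] c(1) by simp
    also have "\<dots> \<le> \<rho> (x - y)" by (rule c(2))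
    finally show ?thesis by simp
  qed
qed

lemma emeasure_gap_grid_inter_rho_ball_ge:
  fixes \<rho> :: "'a::euclidean_space \<Rightarrow> real"
  assumes \<rho>: "is_norm \<rho>" and p: "0 < p" and k: "\<And>i. 0 < k i"
  shows "ennreal (real (\<Prod>i\<le>N. k i) ^ DIM('a))
           \<le> emeasure lebesgue (gap_grid p (block_length p k)
                                \<inter> rho_ball \<rho> ((\<Sum>b\<in>Basis. \<rho> b) * block_length p k N))"
proof -
  define \<sigma> where "\<sigma> = block_length p k"
  define U where "U = {t::real. 0 \<le> t \<and> nat \<lfloor>t\<rfloor> \<in> block_residues p k N}"
  define P where "P = {x::'a. \<forall>b\<in>Basis. x \<bullet> b \<in> U}"
  have U_bounds: "0 \<le> t \<and> t < \<sigma> N" if "t \<in> U" for t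
  proof -
    have "0 \<le> t" "nat \<lfloor>t\<rfloor> < \<sigma> N" using that unfolding U_def block_residues_def \<sigma>_def by auto
    moreover from this have "real (nat \<lfloor>t\<rfloor>) = of_int \<lfloor>t\<rfloor>" by simp
    ultimately show ?thesis by linarith
  qed
  have U_gap: "U \<subseteq> gap_set p \<sigma>"
    unfolding U_def \<sigma>_def using p k by (auto intro: mem_gap_set_of_block_residues)
  have "P \<subseteq> gap_grid p \<sigma> \<inter> rho_ball \<rho> ((\<Sum>b\<in>Basis. \<rho> b) * \<sigma> N)"
  proof
    fix x assume x: "x \<in> P"
    then have "\<rho> x < (\<Sum>b\<in>Basis. \<rho> b) * \<sigma> N"
      using U_bounds unfolding P_def by (intro is_norm_less_of_coordinates_less[OF \<rho>]) fastforce
    with x U_gap show "x \<in> gap_grid p \<sigma> \<inter> rho_ball \<rho> ((\<Sum>b\<in>Basis. \<rho> b) * \<sigma> N)"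
      unfolding P_def gap_grid_def rho_ball_def by auto
  qed
  moreover have "gap_grid p \<sigma> \<inter> rho_ball \<rho> ((\<Sum>b\<in>Basis. \<rho> b) * \<sigma> N) \<in> sets lebesgue"
    by (intro sets.Int gap_grid_sets_lebesgue sets_lebesgue_rho_ball[OF \<rho>])
  ultimately have P_le: "emeasure lebesgue P
      \<le> emeasure lebesgue (gap_grid p \<sigma> \<inter> rho_ball \<rho> ((\<Sum>b\<in>Basis. \<rho> b) * \<sigma> N))"
    by (rule emeasure_mono)
  have "U \<in> sets borel" unfolding U_def by measurable
  then have "emeasure lborel P = emeasure lborel U ^ DIM('a)"
    unfolding P_def by (rule emeasure_lborel_coordinatewise)
  moreover have "P \<in> sets borel" unfolding P_def using \<open>U \<in> sets borel\<close> by measurable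
  then have "emeasure lebesgue P = emeasure lborel P" by simp
  moreover have "finite (block_residues p k N)" unfolding block_residues_def by simp
  then have "emeasure lborel U = ennreal (real (card (block_residues p k N)))"
    unfolding U_def by (simp add: emeasure_lborel_nat_floor_in ennreal_of_nat_eq_real_of_nat)
  moreover note card_block_residues[OF p]
  ultimately have "emeasure lebesgue P = ennreal (real (\<Prod>i\<le>N. k i) ^ DIM('a))"
    by (simp only: ennreal_power[OF of_nat_0_le_iff])
  with P_le show ?thesis unfolding \<sigma>_def by simp
qed

lemma gap_grid_parameters:
  fixes \<rho> :: "'a::euclidean_space \<Rightarrow> real"
  assumes \<rho>: "is_norm \<rho>"
  obtains p :: nat and a :: real and \<delta> :: "nat \<Rightarrow> real"
  where "0 < p" and "0 < a" and "\<And>N. 0 < \<delta> N"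
    and "\<And>\<sigma> n x y. x \<in> gap_grid p \<sigma> \<Longrightarrow> y \<in> gap_grid p \<sigma> \<Longrightarrow> \<rho> (x - y) \<noteq> a * \<sigma> n"
    and "\<And>k N. (\<And>i. 0 < k i) \<Longrightarrow>
           ennreal (\<delta> N) * emeasure lebesgue (rho_ball \<rho> (a * block_length p k N))
             \<le> emeasure lebesgue (gap_grid p (block_length p k) \<inter> rho_ball \<rho> (a * block_length p k N))"
proof -
  obtain c where c: "0 < c" "\<And>x. c * norm x \<le> \<rho> x" using is_norm_ge_norm[OF \<rho>] by blast
  define a where "a = (\<Sum>b\<in>(Basis::'a set). \<rho> b)"
  have a: "0 < a" unfolding a_def by (rule is_norm_sum_Basis_pos[OF \<rho>])
  define p where "p = nat \<lceil>a / c\<rceil> + 1"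
  have "a / c \<le> real (nat \<lceil>a / c\<rceil>)" by (rule real_nat_ceiling_ge)
  then have p: "0 < p" "a \<le> c * (real p - 1)"
    unfolding p_def using c(1) by (simp_all add: pos_divide_le_eq mult.commute)
  define \<delta> where "\<delta> N = (c / (2 * a * real p ^ N)) ^ DIM('a)" for N
  have dense: "ennreal (\<delta> N) * emeasure lebesgue (rho_ball \<rho> (a * block_length p k N))
      \<le> emeasure lebesgue (gap_grid p (block_length p k) \<inter> rho_ball \<rho> (a * block_length p k N))"
    if k: "\<And>i. 0 < k i" for k N
  proof -
    define R where "R = a * block_length p k N"
    have "ennreal (\<delta> N) * emeasure lebesgue (rho_ball \<rho> R) \<le> ennreal (\<delta> N) * ennreal ((2 * R / c) ^ DIM('a))"
      using a unfolding R_def by (intro mult_left_mono emeasure_rho_ball_le[OF \<rho> c]) auto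
    also have "\<dots> = ennreal (\<delta> N * (2 * R / c) ^ DIM('a))"
      unfolding \<delta>_def R_def using a c(1) by (intro ennreal_mult[symmetric]) auto
    also have "\<delta> N * (2 * R / c) ^ DIM('a) = real (\<Prod>i\<le>N. k i) ^ DIM('a)"
    proof -
      have "c / (2 * a * real p ^ N) * (2 * R / c) = real (\<Prod>i\<le>N. k i)"
        unfolding R_def block_length_def using a c(1) p(1) by (simp add: field_simps)
      then show ?thesis unfolding \<delta>_def by (simp flip: power_mult_distrib)
    qed
    also have "ennreal (real (\<Prod>i\<le>N. k i) ^ DIM('a))
        \<le> emeasure lebesgue (gap_grid p (block_length p k) \<inter> rho_ball \<rho> R)"
      unfolding R_def a_def by (rule emeasure_gap_grid_inter_rho_ball_ge[OF \<rho> p(1) k])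
    finally show ?thesis unfolding R_def .
  qed
  show thesis
  proof (rule that[OF p(1) a _ _ dense])
    show "0 < \<delta> N" for N unfolding \<delta>_def using a c(1) p(1) by simp
    show "\<rho> (x - y) \<noteq> a * \<sigma> n" if "x \<in> gap_grid p \<sigma>" "y \<in> gap_grid p \<sigma>" for \<sigma> n x y
      using gap_grid_diff_ne[OF \<rho> c _ that] p(2) unfolding a_def by blast
  qed
qed

lemma tendsto_zero_obtain_thresholds:
  fixes f :: "real \<Rightarrow> real"
  assumes "(f \<longlongrightarrow> 0) at_top" and "\<And>N. 0 < \<delta> N"
  obtains X where "\<And>N R. X N \<le> R \<Longrightarrow> f R \<le> \<delta> N"
proof -
  have "\<forall>N. \<exists>X. \<forall>R\<ge>X. f R \<le> \<delta> N"
    using order_tendstoD(2)[OF assms] unfolding eventually_at_top_linorder by (meson less_imp_le)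
  then obtain X where "\<forall>N. \<forall>R\<ge>X N. f R \<le> \<delta> N" by (auto dest: choice)
  then show thesis by (intro that) auto
qed

theorem theorem1:
  fixes \<rho> :: "'a::euclidean_space \<Rightarrow> real"
    and f :: "real \<Rightarrow> real"
  assumes "is_norm \<rho>"
    and "\<And>R. R > 0 \<Longrightarrow> 0 \<le> f R \<and> f R \<le> 1"
    and "(f \<longlongrightarrow> 0) at_top"
  shows "\<exists>(A::'a set) (R::nat \<Rightarrow> real).
           A \<in> sets lebesgue \<and>
           (\<forall>n. R n > 0) \<and> filterlim R at_top sequentially \<and>
           (\<forall>n. \<forall>x\<in>A. \<forall>y\<in>A. \<rho> (x - y) \<noteq> R n) \<and>
           (\<forall>n. emeasure lebesgue (A \<inter> rho_ball \<rho> (R n))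
                  \<ge> ennreal (f (R n)) * emeasure lebesgue (rho_ball \<rho> (R n)))"
proof -
  obtain p and a :: real and \<delta> where p: "0 < p" and a: "0 < a" and \<delta>: "\<And>N. 0 < \<delta> N"
    and avoid: "\<And>\<sigma> n x y. x \<in> gap_grid p \<sigma> \<Longrightarrow> y \<in> gap_grid p \<sigma> \<Longrightarrow> \<rho> (x - y) \<noteq> a * \<sigma> n"
    and dense: "\<And>k N. (\<And>i. 0 < k i) \<Longrightarrow>
           ennreal (\<delta> N) * emeasure lebesgue (rho_ball \<rho> (a * block_length p k N))
             \<le> emeasure lebesgue (gap_grid p (block_length p k) \<inter> rho_ball \<rho> (a * block_length p k N))"
    using gap_grid_parameters[OF assms(1)] by blast
  obtain X where X: "\<And>N R. X N \<le> R \<Longrightarrow> f R \<le> \<delta> N"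
    using tendsto_zero_obtain_thresholds[OF assms(3)] \<delta> by blast
  define k where "k N = nat \<lceil>X N / a\<rceil> + N + 1" for N
  have k: "0 < k i" for i unfolding k_def by simp
  define R where "R n = a * block_length p k n" for n
  have R_ge: "X n < R n" and R_gt: "a * n < R n" for n
  proof -
    have "k n \<le> block_length p k n" by (rule le_block_length[OF p k])
    then have "X n / a < block_length p k n" "real n < block_length p k n"
      unfolding k_def using real_nat_ceiling_ge[of "X n / a"] by linarith+
    then show "X n < R n" "a * n < R n"
      unfolding R_def using a by (simp_all add: pos_divide_less_eq mult.commute)
  qed
  have "filterlim R at_top sequentially"
  proof (rule filterlim_at_top_mono)
    show "filterlim (\<lambda>n. a * real n) at_top sequentially"
      using a by (intro filterlim_tendsto_pos_mult_at_top[OF tendsto_const] filterlim_real_sequentially)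
    show "\<forall>\<^sub>F n in sequentially. a * real n \<le> R n"
      by (intro always_eventually allI less_imp_le R_gt)
  qed
  moreover have "ennreal (f (R N)) * emeasure lebesgue (rho_ball \<rho> (R N))
      \<le> emeasure lebesgue (gap_grid p (block_length p k) \<inter> rho_ball \<rho> (R N))" for N
  proof -
    have "ennreal (f (R N)) * emeasure lebesgue (rho_ball \<rho> (R N))
        \<le> ennreal (\<delta> N) * emeasure lebesgue (rho_ball \<rho> (R N))"
      using X[OF less_imp_le[OF R_ge]] by (intro mult_right_mono ennreal_leI) auto
    also have "\<dots> \<le> emeasure lebesgue (gap_grid p (block_length p k) \<inter> rho_ball \<rho> (R N))"
      using dense[OF k] unfolding R_def .
    finally show ?thesis .
  qed
  moreover have "0 < R n" for n using R_gt[of n] a by (smt (verit) mult_nonneg_nonneg of_nat_0_le_iff)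
  ultimately show ?thesis
    using gap_grid_sets_lebesgue avoid
    by (intro exI[of _ "gap_grid p (block_length p k)"] exI[of _ R] conjI allI ballI)
       (auto simp: R_def)
qed

end
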